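(* Let $\epsilon,\delta\in(0,1]$, let $B>0$, let $k\ge 1$ be an integer, and let $m\ge 1$ be the number of numerical features of a relation $R$, every tuple of which has feature vector $(t[f_1],\dots,t[f_m])$ with $\ell_2$ norm at most $B$. The Factorized Privacy Mechanism (FPM) described below, applied to $R$ with a join key $A$ (or with $A=\text{null}$), order $k$ and budget $(\epsilon,\delta)$, is $(\epsilon,\delta)$-differentially private.
   Context: Monomials: for $i\ge 0$, an $i$-order monomial of the features $f_1,\dots,f_m$ is $f_1^{k_1}\cdots f_m^{k_m}$ with non-negative integers $k_j$ summing to $i$; distinct monomials are counted once (so e.g. $f_1f_2$ and $f_2f_1$ are the same monomial). The $0$-order monomial is the constant $1$, whose sum over a relation is the count. For a relation $S$ and a monomial $p$, the aggregated monomial is $\sum_{t\in S}p(t)$. The mechanism FPM takes a relation $R$ with numerical features $f_1,\dots,f_m$, possibly a categorical join key $A$ whose domain $\mathrm{dom}(A)$ is public, an order $k$, and $(\epsilon,\delta)$. Let $c_i=4$ if $i$ is odd, $c_i=1$ if $i$ is even and $m=1$, and $c_i=2$ if $i$ is even and $m\ge 2$. Let $\Delta_u=\sqrt{\sum_{i=1}^k c_iB^{2i}}$. (Union case, $A=\text{null}$): set $\Delta=\Delta_u$, $\sigma=\sqrt{2\ln(1.25/\delta)}\,\Delta/\epsilon$, and output, for every monomial $p$ of order $1,\dots,k$, the value $\sum_{t\in R}p(t)+e_p$, where the $e_p$ are i.i.d. $\mathcal N(0,\sigma^2)$. (Join case, $A\neq\text{null}$): set $\Delta=\max\big(\Delta_u,\sqrt{2\sum_{i=0}^kB^{2i}}\big)$,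 $\sigma=\sqrt{2\ln(1.25/\delta)}\,\Delta/\epsilon$, and output, for every $a\in\mathrm{dom}(A)$ and every monomial $p$ of order $0,1,\dots,k$, the value $\sum_{t\in R,\,t[A]=a}p(t)+e_{a,p}$ (the sum being $0$ if no tuple has $A=a$), where all $e_{a,p}$ are i.i.d. $\mathcal N(0,\sigma^2)$. Differential privacy (bounded version): a randomized algorithm $f$ on relations is $(\epsilon,\delta)$-DP if for all relations $R_1,R_2$ with the same number of rows that differ in the values of exactly one row (including possibly its join key value), and every measurable set $S$ of outputs, $\Pr[f(R_1)\in S]\le e^{\epsilon}\Pr[f(R_2)\in S]+\delta$. Both $R_1,R_2$ range over relations satisfying the $\ell_2$-norm bound $B$. *)

theory Defs
  imports "HOL-Probability.Probability"
begin

(* A tuple's feature vector: features f_1..f_m are the components j < m of a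
   function nat => real (components j >= m are irrelevant). *)

definition l2norm :: "nat \<Rightarrow> (nat \<Rightarrow> real) \<Rightarrow> real" where
  "l2norm m x = sqrt (\<Sum>j<m. (x j)\<^sup>2)"

(* Monomials of order i in m variables, represented by exponent vectors
   (k_1,...,k_m) (components >= m are 0); distinct monomials = distinct vectors. *)
definition monomials :: "nat \<Rightarrow> nat \<Rightarrow> (nat \<Rightarrow> nat) set" where
  "monomials m i = {e. (\<forall>j\<ge>m. e j = 0) \<and> (\<Sum>j<m. e j) = i}"

definition monomials_range :: "nat \<Rightarrow> nat \<Rightarrow> nat \<Rightarrow> (nat \<Rightarrow> nat) set" where
  "monomials_range m lo hi = (\<Union>i\<in>{lo..hi}. monomials m i)"

definition mono_eval :: "nat \<Rightarrow> (nat \<Rightarrow> nat) \<Rightarrow> (nat \<Rightarrow> real) \<Rightarrow> real" where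
  "mono_eval m e x = (\<Prod>j<m. x j ^ e j)"

definition cFPM :: "nat \<Rightarrow> nat \<Rightarrow> real" where
  "cFPM m i = (if odd i then 4 else if m = 1 then 1 else 2)"

definition Delta_u :: "nat \<Rightarrow> nat \<Rightarrow> real \<Rightarrow> real" where
  "Delta_u m k B = sqrt (\<Sum>i=1..k. cFPM m i * B ^ (2 * i))"

definition Delta_join :: "nat \<Rightarrow> nat \<Rightarrow> real \<Rightarrow> real" where
  "Delta_join m k B = max (Delta_u m k B) (sqrt (2 * (\<Sum>i=0..k. B ^ (2 * i))))"

definition gauss_sigma :: "real \<Rightarrow> real \<Rightarrow> real \<Rightarrow> real" where
  "gauss_sigma Delta eps delta = sqrt (2 * ln (1.25 / delta)) * Delta / eps"

(* Union case (A = null): relation = list of feature vectors.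
   Output: for each monomial p of order 1..k, sum_t p(t) + N(0, sigma^2), independently. *)
definition FPM_union ::
  "nat \<Rightarrow> nat \<Rightarrow> real \<Rightarrow> real \<Rightarrow> real \<Rightarrow> (nat \<Rightarrow> real) list \<Rightarrow> ((nat \<Rightarrow> nat) \<Rightarrow> real) measure" where
  "FPM_union m k B eps delta R =
     PiM (monomials_range m 1 k)
       (\<lambda>p. density lborel
              (normal_density (\<Sum>t\<leftarrow>R. mono_eval m p t)
                              (gauss_sigma (Delta_u m k B) eps delta)))"

(* Join case: relation = list of (join key value, feature vector); D = dom(A).
   Output: for each a in D and monomial p of order 0..k,
   sum_{t, t[A]=a} p(t) + N(0, sigma^2), independently. *)
definition FPM_join ::
  "'a set \<Rightarrow> nat \<Rightarrow> nat \<Rightarrow> real \<Rightarrow> real \<Rightarrow> real \<Rightarrow> ('a \<times> (nat \<Rightarrow> real)) list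
     \<Rightarrow> ('a \<times> (nat \<Rightarrow> nat) \<Rightarrow> real) measure" where
  "FPM_join D m k B eps delta R =
     PiM (D \<times> monomials_range m 0 k)
       (\<lambda>(a, p). density lborel
              (normal_density (\<Sum>t\<leftarrow>filter (\<lambda>t. fst t = a) R. mono_eval m p (snd t))
                              (gauss_sigma (Delta_join m k B) eps delta)))"

(* Bounded neighbouring: same number of rows, differing in exactly one row. *)
definition neighbours :: "'r list \<Rightarrow> 'r list \<Rightarrow> bool" where
  "neighbours R1 R2 \<longleftrightarrow> length R1 = length R2 \<and>
     (\<exists>i<length R1. R1 ! i \<noteq> R2 ! i \<and> (\<forall>j<length R1. j \<noteq> i \<longrightarrow> R1 ! j = R2 ! j))"

definition diff_private :: "('r list \<Rightarrow> 'o measure) \<Rightarrow> ('r \<Rightarrow> bool) \<Rightarrow> real \<Rightarrow> real \<Rightarrow> bool" where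
  "diff_private f ok eps delta \<longleftrightarrow>
     (\<forall>R1 R2. neighbours R1 R2 \<and> (\<forall>t\<in>set R1. ok t) \<and> (\<forall>t\<in>set R2. ok t) \<longrightarrow>
        (\<forall>S\<in>sets (f R1). measure (f R1) S \<le> exp eps * measure (f R2) S + delta))"

end

theory Submission
  imports Defs
begin

(*
  FPM is a Gaussian mechanism applied to the vector of aggregated monomials, so it suffices to
  bound the l2-sensitivity of that vector by Delta.  Replacing one row t by s moves the block of
  monomials of order i by sum_e (t^e - s^e)^2.  Every monomial of order i is prod_l t(w l) for at
  least one word w of length i over the features, so this is at most the sum over all words,
  which equals |t|^(2i) + |s|^(2i) - 2 <t,s>^i <= c_i B^(2i).  In the join case the changed row
  either stays in its key group (the same bound; order 0 does not move) or moves between two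
  groups (at most 2 sum_i B^(2i)).
  For two product normals whose means are at distance r <= Delta, the privacy loss is an affine
  function of a single normal variable; it exceeds eps only on a normal tail, whose mass the choice
  sigma = sqrt(2 ln(1.25/delta)) Delta/eps keeps below delta.
*)

section \<open>Gaussian products and tails\<close>

lemma PiM_density_lborel:
  fixes f :: "'i \<Rightarrow> real \<Rightarrow> ennreal"
  assumes fin: "finite I" and [measurable]: "\<And>i. f i \<in> borel_measurable borel"
    and prob: "\<And>i. prob_space (density lborel (f i))"
  shows "PiM I (\<lambda>i. density lborel (f i)) = density (PiM I (\<lambda>_. lborel)) (\<lambda>x. \<Prod>i\<in>I. f i (x i))"
proof -
  interpret ps: product_sigma_finite "\<lambda>i. density lborel (f i)"
    unfolding product_sigma_finite_def using prob by (simp add: prob_space_imp_sigma_finite)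
  interpret pl: product_sigma_finite "\<lambda>i. lborel :: real measure"
    unfolding product_sigma_finite_def by (simp add: lborel.sigma_finite_measure_axioms)
  have "density (PiM I (\<lambda>_. lborel)) (\<lambda>x. \<Prod>i\<in>I. f i (x i)) = PiM I (\<lambda>i. density lborel (f i))"
  proof (rule ps.PiM_eqI[OF fin])
    show "sets (density (PiM I (\<lambda>_. lborel)) (\<lambda>x. \<Prod>i\<in>I. f i (x i))) = sets (PiM I (\<lambda>i. density lborel (f i)))"
      by (simp only: sets_density) (rule sets_PiM_cong; simp)
  next
    fix A assume "\<And>i. i \<in> I \<Longrightarrow> A i \<in> sets (density lborel (f i))"
    then have A: "\<And>i. i \<in> I \<Longrightarrow> A i \<in> sets borel" by simp
    have PA: "Pi\<^sub>E I A \<in> sets (PiM I (\<lambda>_. lborel))"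
      by (rule sets_PiM_I_finite[OF fin]) (simp add: A)
    have "emeasure (density (PiM I (\<lambda>_. lborel)) (\<lambda>x. \<Prod>i\<in>I. f i (x i))) (Pi\<^sub>E I A)
        = (\<integral>\<^sup>+x. (\<Prod>i\<in>I. f i (x i)) * indicator (Pi\<^sub>E I A) x \<partial>PiM I (\<lambda>_. lborel))"
      by (rule emeasure_density[OF _ PA]) measurable
    also have "\<dots> = (\<integral>\<^sup>+x. (\<Prod>i\<in>I. f i (x i) * indicator (A i) (x i)) \<partial>PiM I (\<lambda>_. lborel))"
    proof (rule nn_integral_cong)
      fix x assume "x \<in> space (PiM I (\<lambda>_. lborel :: real measure))"
      then have "x \<in> extensional I" by (simp add: space_PiM PiE_def)
      then have "indicator (Pi\<^sub>E I A) x = (\<Prod>i\<in>I. indicator (A i) (x i) :: ennreal)"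
        using fin by (auto simp: indicator_def PiE_def Pi_def)
      then show "(\<Prod>i\<in>I. f i (x i)) * indicator (Pi\<^sub>E I A) x = (\<Prod>i\<in>I. f i (x i) * indicator (A i) (x i))"
        by (simp add: prod.distrib)
    qed
    also have "\<dots> = (\<Prod>i\<in>I. \<integral>\<^sup>+y. f i y * indicator (A i) y \<partial>lborel)"
      using A by (subst pl.product_nn_integral_prod[OF fin]) auto
    also have "\<dots> = (\<Prod>i\<in>I. emeasure (density lborel (f i)) (A i))"
      using A by (intro prod.cong refl) (simp add: emeasure_density)
    finally show "emeasure (density (PiM I (\<lambda>_. lborel)) (\<lambda>x. \<Prod>i\<in>I. f i (x i))) (Pi\<^sub>E I A)
        = (\<Prod>i\<in>I. emeasure (density lborel (f i)) (A i))" .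
  qed
  then show ?thesis by simp
qed

lemma indep_vars_PiM_components:
  assumes "I \<noteq> {}" and M: "\<And>i. prob_space (M i)"
  shows "prob_space.indep_vars (PiM I M) M (\<lambda>i x. x i) I"
proof -
  interpret P: prob_space "PiM I M" by (rule prob_space_PiM) (rule M)
  have "distr (PiM I M) (PiM I M) (\<lambda>x. \<lambda>i\<in>I. x i) = distr (PiM I M) (PiM I M) (\<lambda>x. x)"
    by (rule distr_cong) (auto simp: space_PiM PiE_def extensional_restrict)
  also have "\<dots> = PiM I (\<lambda>i. distr (PiM I M) (M i) (\<lambda>x. x i))"
    by (simp add: distr_PiM_component M cong: PiM_cong)
  finally show ?thesis
    using assms(1) by (subst P.indep_vars_iff_distr_eq_PiM') auto
qed

lemma distributed_PiM_normal_component: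
  assumes "0 < \<sigma>" and "i \<in> I"
  shows "distributed (PiM I (\<lambda>i. density lborel (normal_density (\<mu> i) \<sigma>))) lborel
           (\<lambda>x. x i) (normal_density (\<mu> i) \<sigma>)"
proof -
  let ?M = "\<lambda>i. density lborel (\<lambda>y. ennreal (normal_density (\<mu> i) \<sigma> y))"
  have "distr (PiM I ?M) lborel (\<lambda>x. x i) = distr (PiM I ?M) (?M i) (\<lambda>x. x i)"
    by (rule distr_cong) simp_all
  also have "\<dots> = ?M i"
    using assms by (intro distr_PiM_component prob_space_normal_density)
  finally show ?thesis
    using measurable_component_singleton[OF assms(2), of ?M]
    by (simp add: distributed_def measurable_cong_sets[OF refl sets_lborel])
qed

lemma PiM_normal_linear_combination:
  fixes d \<mu> :: "'i \<Rightarrow> real"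
  assumes fin: "finite I" and \<sigma>: "0 < \<sigma>" and d: "0 < (\<Sum>i\<in>I. (d i)\<^sup>2)"
  shows "distributed (PiM I (\<lambda>i. density lborel (normal_density (\<mu> i) \<sigma>))) lborel
           (\<lambda>x. \<Sum>i\<in>I. d i * (x i - \<mu> i)) (normal_density 0 (\<sigma> * sqrt (\<Sum>i\<in>I. (d i)\<^sup>2)))"
proof -
  let ?M = "\<lambda>i. density lborel (\<lambda>y. ennreal (normal_density (\<mu> i) \<sigma> y))"
  interpret P: prob_space "PiM I ?M"
    by (rule prob_space_PiM) (rule prob_space_normal_density[OF \<sigma>])
  define J where "J = {i\<in>I. d i \<noteq> 0}"
  have J: "finite J" "J \<subseteq> I" "J \<noteq> {}"
    using fin d by (auto simp: J_def intro: ccontr)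
  have sum_J: "(\<Sum>i\<in>J. g i) = (\<Sum>i\<in>I. g i)" if "\<And>i. d i = 0 \<Longrightarrow> g i = 0" for g :: "'i \<Rightarrow> real"
    using that by (intro sum.mono_neutral_left[OF fin J(2)]) (auto simp: J_def)
  have indep: "P.indep_vars (\<lambda>_. borel) (\<lambda>i x. d i * (x i - \<mu> i)) J"
    using P.indep_vars_compose2[OF P.indep_vars_subset[OF indep_vars_PiM_components J(2)],
        of "\<lambda>i y. d i * (y - \<mu> i)" "\<lambda>_. borel"] J prob_space_normal_density[OF \<sigma>]
    by (auto simp: measurable_cong_sets[OF sets_density refl])
  have "distributed (PiM I ?M) lborel (\<lambda>x. - d i * \<mu> i + d i * x i) (normal_density 0 (\<bar>d i\<bar> * \<sigma>))"
    if "i \<in> J" for i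
  proof -
    have "i \<in> I" "d i \<noteq> 0" using that by (auto simp: J_def)
    from P.normal_density_affine[OF distributed_PiM_normal_component[OF \<sigma> this(1)] \<sigma> this(2),
        where \<beta>="- d i * \<mu> i"]
    show ?thesis by simp
  qed
  then have "distributed (PiM I ?M) lborel (\<lambda>x. \<Sum>i\<in>J. d i * (x i - \<mu> i))
      (normal_density (\<Sum>i\<in>J. 0) (sqrt (\<Sum>i\<in>J. (\<bar>d i\<bar> * \<sigma>)\<^sup>2)))"
    using \<sigma> by (intro P.sum_indep_normal J(1,3) indep) (auto simp: J_def algebra_simps)
  moreover have "sqrt (\<Sum>i\<in>J. (\<bar>d i\<bar> * \<sigma>)\<^sup>2) = \<sigma> * sqrt (\<Sum>i\<in>I. (d i)\<^sup>2)"
    using \<sigma> by (simp add: power_mult_distrib sum_distrib_right[symmetric] sum_J real_sqrt_mult)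
  ultimately show ?thesis
    by (simp add: sum_J)
qed

lemma prod_normal_density_ratio:
  fixes \<mu> \<nu> x :: "'i \<Rightarrow> real"
  assumes "finite I"
  shows "(\<Prod>i\<in>I. normal_density (\<mu> i) \<sigma> (x i)) = (\<Prod>i\<in>I. normal_density (\<nu> i) \<sigma> (x i))
    * exp ((2 * (\<Sum>i\<in>I. (\<mu> i - \<nu> i) * (x i - \<mu> i)) + (\<Sum>i\<in>I. (\<mu> i - \<nu> i)\<^sup>2)) / (2 * \<sigma>\<^sup>2))"
proof -
  have "normal_density (\<mu> i) \<sigma> (x i) = normal_density (\<nu> i) \<sigma> (x i)
      * exp ((2 * ((\<mu> i - \<nu> i) * (x i - \<mu> i)) + (\<mu> i - \<nu> i)\<^sup>2) / (2 * \<sigma>\<^sup>2))" for i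
  proof -
    have "- (x i - \<mu> i)\<^sup>2 / (2 * \<sigma>\<^sup>2) = - (x i - \<nu> i)\<^sup>2 / (2 * \<sigma>\<^sup>2)
        + (2 * ((\<mu> i - \<nu> i) * (x i - \<mu> i)) + (\<mu> i - \<nu> i)\<^sup>2) / (2 * \<sigma>\<^sup>2)"
      by (simp add: add_divide_distrib[symmetric] power2_eq_square algebra_simps)
    then have "exp (- (x i - \<mu> i)\<^sup>2 / (2 * \<sigma>\<^sup>2)) = exp (- (x i - \<nu> i)\<^sup>2 / (2 * \<sigma>\<^sup>2))
        * exp ((2 * ((\<mu> i - \<nu> i) * (x i - \<mu> i)) + (\<mu> i - \<nu> i)\<^sup>2) / (2 * \<sigma>\<^sup>2))"
      by (simp only: exp_add)
    then show ?thesis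
      unfolding normal_density_def by simp
  qed
  then have "(\<Prod>i\<in>I. normal_density (\<mu> i) \<sigma> (x i)) = (\<Prod>i\<in>I. normal_density (\<nu> i) \<sigma> (x i))
      * exp (\<Sum>i\<in>I. (2 * ((\<mu> i - \<nu> i) * (x i - \<mu> i)) + (\<mu> i - \<nu> i)\<^sup>2) / (2 * \<sigma>\<^sup>2))"
    by (simp add: prod.distrib exp_sum[OF assms])
  then show ?thesis
    by (simp add: sum_divide_distrib[symmetric] sum.distrib sum_distrib_left)
qed

lemma PiM_normal_eq_density:
  assumes "finite I" "0 < \<sigma>"
  shows "PiM I (\<lambda>i. density lborel (normal_density (\<mu> i) \<sigma>))
    = density (PiM I (\<lambda>_. lborel)) (\<lambda>x. ennreal (\<Prod>i\<in>I. normal_density (\<mu> i) \<sigma> (x i)))"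
  using assms by (subst PiM_density_lborel) (simp_all add: prob_space_normal_density prod_ennreal)

lemma prod_normal_density_le_exp:
  fixes \<mu> \<nu> x :: "'i \<Rightarrow> real"
  assumes "finite I" "0 < \<sigma>"
    and "(\<Sum>i\<in>I. (\<mu> i - \<nu> i) * (x i - \<mu> i)) \<le> \<epsilon> * \<sigma>\<^sup>2 - (\<Sum>i\<in>I. (\<mu> i - \<nu> i)\<^sup>2) / 2"
  shows "(\<Prod>i\<in>I. normal_density (\<mu> i) \<sigma> (x i)) \<le> exp \<epsilon> * (\<Prod>i\<in>I. normal_density (\<nu> i) \<sigma> (x i))"
proof -
  have "(2 * (\<Sum>i\<in>I. (\<mu> i - \<nu> i) * (x i - \<mu> i)) + (\<Sum>i\<in>I. (\<mu> i - \<nu> i)\<^sup>2)) / (2 * \<sigma>\<^sup>2) \<le> \<epsilon>"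
    using assms(2,3) by (simp add: divide_le_eq)
  then show ?thesis
    unfolding prod_normal_density_ratio[OF assms(1), of \<mu> \<sigma> x \<nu>]
    by (subst mult.commute) (intro mult_left_mono prod_nonneg normal_density_nonneg; simp)
qed

lemma density_measure_le_exp_plus:
  fixes p q :: "'a \<Rightarrow> real"
  assumes [measurable]: "p \<in> borel_measurable M" "q \<in> borel_measurable M"
    and q_nonneg: "\<And>x. 0 \<le> q x"
    and fin: "finite_measure (density M p)" "finite_measure (density M q)"
    and [measurable]: "G \<in> sets M" and ratio: "\<And>x. x \<in> G \<Longrightarrow> p x \<le> exp \<epsilon> * q x"
    and bad: "measure (density M p) (space M - G) \<le> \<delta>"
    and S[measurable]: "S \<in> sets M"
  shows "measure (density M p) S \<le> exp \<epsilon> * measure (density M q) S + \<delta>"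
proof -
  interpret P: finite_measure "density M p" by (rule fin)
  interpret Q: finite_measure "density M q" by (rule fin)
  have "emeasure (density M p) (S \<inter> G) = (\<integral>\<^sup>+x. ennreal (p x) * indicator (S \<inter> G) x \<partial>M)"
    by (simp add: emeasure_density)
  also have "\<dots> \<le> (\<integral>\<^sup>+x. ennreal (exp \<epsilon>) * (ennreal (q x) * indicator (S \<inter> G) x) \<partial>M)"
    using ratio q_nonneg
    by (intro nn_integral_mono) (auto simp: indicator_def ennreal_mult[symmetric] ennreal_leI)
  also have "\<dots> = ennreal (exp \<epsilon>) * emeasure (density M q) (S \<inter> G)"
    by (simp add: nn_integral_cmult emeasure_density)
  also have "\<dots> \<le> ennreal (exp \<epsilon>) * emeasure (density M q) S"
    by (intro mult_left_mono emeasure_mono) auto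
  finally have good: "measure (density M p) (S \<inter> G) \<le> exp \<epsilon> * measure (density M q) S"
    by (simp add: P.emeasure_eq_measure Q.emeasure_eq_measure ennreal_mult[symmetric])
  have "measure (density M p) (S - G) \<le> measure (density M p) (space M - G)"
    using sets.sets_into_space[OF S] by (intro P.finite_measure_mono) auto
  then have "measure (density M p) (S - G) \<le> \<delta>"
    using bad by linarith
  moreover have "measure (density M p) S = measure (density M p) (S \<inter> G) + measure (density M p) (S - G)"
    by (subst P.finite_measure_Union[symmetric]) (auto intro: arg_cong[where f="measure _"])
  ultimately show ?thesis
    using good by linarith
qed

(* Bound on P(Z > a) for Z standard normal: Chernoff-type for a >= 0; for a < 0 the half-mass 1/2
   plus the density bound 1/sqrt(2 pi) <= 1 on [a, 0]. *)
definition normal_tail_majorant :: "real \<Rightarrow> real" where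
  "normal_tail_majorant a = (if 0 \<le> a then exp (- a\<^sup>2 / 2) / 2 else 1 / 2 - a)"

lemma normal_tail_majorant_antimono:
  assumes "a \<le> b"
  shows "normal_tail_majorant b \<le> normal_tail_majorant a"
proof (cases "0 \<le> a")
  case True
  then have "a\<^sup>2 \<le> b\<^sup>2" using assms by (intro power_mono) auto
  then show ?thesis using True assms by (simp add: normal_tail_majorant_def)
next
  case False
  have "exp (- b\<^sup>2 / 2) \<le> 1" by simp
  then have "exp (- b\<^sup>2 / 2) / 2 \<le> 1 / 2 - a" using False by linarith
  then show ?thesis using False assms by (simp add: normal_tail_majorant_def)
qed

lemma normal_density_le_inverse:
  assumes "0 < \<sigma>"
  shows "normal_density \<mu> \<sigma> x \<le> 1 / \<sigma>"
proof -
  have "1 \<le> sqrt (2 * pi)"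
    using pi_gt3 by simp
  then have "\<sigma> \<le> sqrt (2 * pi * \<sigma>\<^sup>2)"
    using assms by (simp add: real_sqrt_mult)
  then have "1 / sqrt (2 * pi * \<sigma>\<^sup>2) \<le> 1 / \<sigma>"
    using assms by (intro divide_left_mono) auto
  moreover have "exp (- (x - \<mu>)\<^sup>2 / (2 * \<sigma>\<^sup>2)) \<le> 1"
    by simp
  ultimately have "1 / sqrt (2 * pi * \<sigma>\<^sup>2) * exp (- (x - \<mu>)\<^sup>2 / (2 * \<sigma>\<^sup>2)) \<le> 1 / \<sigma> * 1"
    using assms by (intro mult_mono) auto
  then show ?thesis
    unfolding normal_density_def by simp
qed

lemma normal_density_positive_half_le:
  assumes s: "0 < s"
  shows "(\<integral>\<^sup>+y. ennreal (normal_density 0 s y) * indicator {0<..} y \<partial>lborel) \<le> ennreal (1 / 2)"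
proof -
  define A where "A = (\<integral>\<^sup>+y. ennreal (normal_density 0 s y) * indicator {0<..} y \<partial>lborel)"
  define B where "B = (\<integral>\<^sup>+y. ennreal (normal_density 0 s y) * indicator {..0} y \<partial>lborel)"
  have "A + B = (\<integral>\<^sup>+y. ennreal (normal_density 0 s y) \<partial>lborel)"
    unfolding A_def B_def
    by (subst nn_integral_add[symmetric]) (auto intro!: nn_integral_cong simp: indicator_def)
  also have "\<dots> = 1"
    using s by (simp add: nn_integral_eq_integral normal_density_nonneg)
  finally have "A + B = 1" .
  have "A = (\<integral>\<^sup>+x. ennreal (normal_density 0 s x) * indicator {..<0} x \<partial>lborel)"
    unfolding A_def
    by (subst nn_integral_real_affine[where c="-1" and t=0])
       (auto intro!: nn_integral_cong simp: normal_density_def indicator_def)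
  also have "\<dots> \<le> B"
    unfolding B_def by (intro nn_integral_mono) (auto simp: indicator_def)
  finally have "A + A \<le> 1"
    using \<open>A + B = 1\<close> by (metis add_left_mono)
  then have "A \<le> ennreal (1 / 2)"
  proof (cases A)
    case (real r)
    then have "ennreal (r + r) \<le> ennreal 1"
      using \<open>A + A \<le> 1\<close> by (simp only: ennreal_plus[OF real(1) real(1)] real(2) ennreal_1)
    then have "r \<le> 1 / 2"
      by (simp add: ennreal_le_iff)
    then show ?thesis
      unfolding real(2) by (rule ennreal_leI)
  qed (simp add: top_unique)
  then show ?thesis
    unfolding A_def .
qed

lemma normal_upper_tail_nonneg_le:
  assumes s: "0 < s" and T: "0 \<le> T"
  shows "(\<integral>\<^sup>+y. ennreal (normal_density 0 s y) * indicator {T<..} y \<partial>lborel)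
    \<le> ennreal (exp (- (T / s)\<^sup>2 / 2) / 2)"
proof -
  have shift: "normal_density 0 s (T + x) \<le> exp (- (T / s)\<^sup>2 / 2) * normal_density 0 s x" if "0 < x" for x
  proof -
    have "T\<^sup>2 + x\<^sup>2 \<le> (T + x)\<^sup>2"
      using T that by (simp add: power2_eq_square algebra_simps)
    then have "- (T + x)\<^sup>2 / (2 * s\<^sup>2) \<le> - (T / s)\<^sup>2 / 2 + - (x - 0)\<^sup>2 / (2 * s\<^sup>2)"
      using s by (simp add: power_divide field_simps)
    then have "exp (- (T + x)\<^sup>2 / (2 * s\<^sup>2)) \<le> exp (- (T / s)\<^sup>2 / 2) * exp (- (x - 0)\<^sup>2 / (2 * s\<^sup>2))"
      by (simp only: exp_add[symmetric] exp_le_cancel_iff)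
    then show ?thesis
      unfolding normal_density_def by (simp add: divide_right_mono)
  qed
  have "(\<integral>\<^sup>+y. ennreal (normal_density 0 s y) * indicator {T<..} y \<partial>lborel)
      = (\<integral>\<^sup>+x. ennreal (normal_density 0 s (T + 1 * x)) * indicator {T<..} (T + 1 * x) \<partial>lborel)"
    by (subst nn_integral_real_affine[where c=1 and t=T]) auto
  also have "\<dots> \<le> (\<integral>\<^sup>+x. ennreal (exp (- (T / s)\<^sup>2 / 2)) * (ennreal (normal_density 0 s x) * indicator {0<..} x) \<partial>lborel)"
    using shift by (intro nn_integral_mono) (simp add: indicator_def ennreal_mult[symmetric] ennreal_leI)
  also have "\<dots> = ennreal (exp (- (T / s)\<^sup>2 / 2)) * (\<integral>\<^sup>+x. ennreal (normal_density 0 s x) * indicator {0<..} x \<partial>lborel)"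
    by (rule nn_integral_cmult) auto
  also have "\<dots> \<le> ennreal (exp (- (T / s)\<^sup>2 / 2)) * ennreal (1 / 2)"
    by (intro mult_left_mono normal_density_positive_half_le s) auto
  also have "\<dots> = ennreal (exp (- (T / s)\<^sup>2 / 2) / 2)"
    using ennreal_mult[of "exp (- (T / s)\<^sup>2 / 2)" "1 / 2"] by simp
  finally show ?thesis .
qed

lemma normal_upper_tail_neg_le:
  assumes s: "0 < s" and T: "T < 0"
  shows "(\<integral>\<^sup>+y. ennreal (normal_density 0 s y) * indicator {T<..} y \<partial>lborel) \<le> ennreal (1 / 2 - T / s)"
proof -
  have "(\<integral>\<^sup>+y. ennreal (normal_density 0 s y) * indicator {T<..} y \<partial>lborel)
     \<le> (\<integral>\<^sup>+y. ennreal (normal_density 0 s y) * indicator {0<..} y + ennreal (1 / s) * indicator {T..0} y \<partial>lborel)"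
    using normal_density_le_inverse[OF s]
    by (intro nn_integral_mono) (auto simp: indicator_def ennreal_leI)
  also have "\<dots> = (\<integral>\<^sup>+y. ennreal (normal_density 0 s y) * indicator {0<..} y \<partial>lborel) + ennreal (1 / s) * ennreal (- T)"
    using T by (subst nn_integral_add) (auto simp: nn_integral_cmult_indicator)
  also have "ennreal (1 / s) * ennreal (- T) = ennreal (- T / s)"
    using s T by (simp add: ennreal_mult[symmetric])
  also have "(\<integral>\<^sup>+y. ennreal (normal_density 0 s y) * indicator {0<..} y \<partial>lborel) + ennreal (- T / s)
      \<le> ennreal (1 / 2) + ennreal (- T / s)"
    using s by (intro add_right_mono normal_density_positive_half_le)
  also have "\<dots> = ennreal (1 / 2 - T / s)"
    using ennreal_plus[of "1 / 2" "- T / s"] divide_neg_pos[OF T s] by simp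
  finally show ?thesis .
qed

lemma normal_upper_tail_le_majorant:
  assumes "0 < s"
  shows "(\<integral>\<^sup>+y. ennreal (normal_density 0 s y) * indicator {T<..} y \<partial>lborel)
    \<le> ennreal (normal_tail_majorant (T / s))"
  using normal_upper_tail_nonneg_le[OF assms, of T] normal_upper_tail_neg_le[OF assms, of T] assms
  by (cases "0 \<le> T") (auto simp: normal_tail_majorant_def zero_le_divide_iff)

lemma exp_half_le: "exp (1 / 2 :: real) \<le> 5 / 2"
proof -
  have "exp (1 / 2 :: real) * exp (1 / 2) = exp 1"
    by (simp add: exp_add[symmetric])
  then have "(exp (1 / 2) :: real)\<^sup>2 \<le> (5 / 2)\<^sup>2"
    using exp_le by (simp add: power2_eq_square)
  then show ?thesis
    by (rule power2_le_imp_le) simp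
qed

lemma gauss_threshold_constant:
  assumes "0 < \<delta>" "\<delta> \<le> 1"
  defines "c \<equiv> sqrt (2 * ln (1.25 / \<delta>))"
  shows "0 < c" "2 / 5 \<le> c\<^sup>2" "exp (- c\<^sup>2 / 2) = 4 / 5 * \<delta>"
proof -
  have "ln (\<delta> / 1.25) \<le> \<delta> / 1.25 - 1"
    using assms by (intro ln_le_minus_one) simp
  moreover have "ln (\<delta> / 1.25) = - ln (1.25 / \<delta>)"
    using assms by (simp add: ln_div)
  ultimately have "1 / 5 \<le> ln (1.25 / \<delta>)"
    using assms by simp
  then have "0 < c" "2 / 5 \<le> c\<^sup>2" "c\<^sup>2 = 2 * ln (1.25 / \<delta>)"
    unfolding c_def by simp_all
  then show "0 < c" "2 / 5 \<le> c\<^sup>2" "exp (- c\<^sup>2 / 2) = 4 / 5 * \<delta>"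
    using assms by (simp_all add: exp_minus field_simps)
qed

(* This is where the constant 1.25 is calibrated: if a = c - eps/(2c) >= 0 then a^2 >= c^2 - 1 and
   exp(1/2)/2 * (4/5) <= 1; if a < 0 then c^2 < 1/2, which already forces delta >= 15/16. *)
lemma normal_tail_majorant_gauss_threshold:
  assumes e: "0 < \<epsilon>" "\<epsilon> \<le> 1" and d: "0 < \<delta>" "\<delta> \<le> 1"
  defines "c \<equiv> sqrt (2 * ln (1.25 / \<delta>))"
  shows "normal_tail_majorant (c - \<epsilon> / (2 * c)) \<le> \<delta>"
proof -
  have c: "0 < c" and c2: "2 / 5 \<le> c\<^sup>2" and exp_c: "exp (- c\<^sup>2 / 2) = 4 / 5 * \<delta>"
    using gauss_threshold_constant[OF d] by (simp_all add: c_def)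
  show ?thesis
  proof (cases "0 \<le> c - \<epsilon> / (2 * c)")
    case True
    have "(c - \<epsilon> / (2 * c))\<^sup>2 = c\<^sup>2 - \<epsilon> + (\<epsilon> / (2 * c))\<^sup>2"
      using c by (simp add: power2_diff field_simps power2_eq_square)
    then have "c\<^sup>2 - 1 \<le> (c - \<epsilon> / (2 * c))\<^sup>2"
      using e zero_le_power2[of "\<epsilon> / (2 * c)"] by linarith
    then have "exp (- (c - \<epsilon> / (2 * c))\<^sup>2 / 2) \<le> exp (1 / 2) * exp (- c\<^sup>2 / 2)"
      by (simp add: exp_add[symmetric])
    also have "\<dots> \<le> 5 / 2 * (4 / 5 * \<delta>)"
      unfolding exp_c using exp_half_le d by (intro mult_right_mono) auto
    finally show ?thesis
      using True by (simp add: normal_tail_majorant_def)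
  next
    case False
    then have "2 * c\<^sup>2 < \<epsilon>"
      using c by (simp add: field_simps power2_eq_square)
    moreover have "1 - c\<^sup>2 / 2 \<le> 4 / 5 * \<delta>"
      using exp_ge_add_one_self[of "- c\<^sup>2 / 2", unfolded exp_c] by simp
    ultimately have "15 / 16 \<le> \<delta>"
      using e by linarith
    have "3 / 5 \<le> c"
      by (rule power2_le_imp_le) (use c2 c in \<open>simp_all add: power_divide\<close>)
    have "\<epsilon> / (2 * c) \<le> 1 / (2 * c)"
      using e c by (intro divide_right_mono) auto
    also have "\<dots> \<le> 5 / 6"
      using \<open>3 / 5 \<le> c\<close> by (simp add: field_simps)
    finally have "\<epsilon> / (2 * c) - c \<le> 5 / 6 - 3 / 5"
      using \<open>3 / 5 \<le> c\<close> by linarith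
    then show ?thesis
      using False \<open>15 / 16 \<le> \<delta>\<close> by (simp add: normal_tail_majorant_def)
  qed
qed

lemma gauss_sigma_pos:
  assumes "0 < \<epsilon>" "0 < \<delta>" "\<delta> \<le> 1" "0 < \<Delta>"
  shows "0 < gauss_sigma \<Delta> \<epsilon> \<delta>"
  using assms by (simp add: gauss_sigma_def field_simps)

lemma gauss_sigma_tail_le:
  assumes e: "0 < \<epsilon>" "\<epsilon> \<le> 1" and d: "0 < \<delta>" "\<delta> \<le> 1" and r: "0 < r" "r \<le> \<Delta>"
  defines "\<sigma> \<equiv> gauss_sigma \<Delta> \<epsilon> \<delta>"
  shows "normal_tail_majorant (\<epsilon> * \<sigma> / r - r / (2 * \<sigma>)) \<le> \<delta>"
proof -
  define c where "c = sqrt (2 * ln (1.25 / \<delta>))"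
  have \<sigma>: "0 < \<sigma>" "\<sigma> = c * \<Delta> / \<epsilon>"
    using gauss_sigma_pos[OF e(1) d] r by (simp_all add: \<sigma>_def c_def gauss_sigma_def)
  then have c: "0 < c"
    using e r by (simp add: zero_less_divide_iff zero_less_mult_iff)
  have "\<epsilon> * \<sigma> = c * \<Delta>"
    using \<sigma> e by simp
  then have "c = \<epsilon> * \<sigma> / \<Delta>" "\<epsilon> / (2 * c) = \<Delta> / (2 * \<sigma>)"
    using \<sigma>(1) c r by (simp_all add: field_simps)
  moreover have "\<epsilon> * \<sigma> / \<Delta> \<le> \<epsilon> * \<sigma> / r"
    using \<sigma>(1) e r by (intro divide_left_mono) auto
  moreover have "r / (2 * \<sigma>) \<le> \<Delta> / (2 * \<sigma>)"
    using \<sigma>(1) r by (intro divide_right_mono) auto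
  ultimately have "c - \<epsilon> / (2 * c) \<le> \<epsilon> * \<sigma> / r - r / (2 * \<sigma>)"
    by linarith
  then show ?thesis
    using normal_tail_majorant_antimono normal_tail_majorant_gauss_threshold[OF e d] c_def
    by (metis order_trans)
qed

section \<open>The Gaussian mechanism\<close>

lemma gaussian_privacy_loss_tail:
  fixes \<mu> \<nu> :: "'i \<Rightarrow> real"
  assumes fin: "finite I" and e: "0 < \<epsilon>" "\<epsilon> \<le> 1" and d: "0 < \<delta>" "\<delta> \<le> 1" and \<Delta>: "0 < \<Delta>"
    and n2: "0 < (\<Sum>i\<in>I. (\<mu> i - \<nu> i)\<^sup>2)" and sens: "(\<Sum>i\<in>I. (\<mu> i - \<nu> i)\<^sup>2) \<le> \<Delta>\<^sup>2"
  defines "\<sigma> \<equiv> gauss_sigma \<Delta> \<epsilon> \<delta>"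
  defines "P \<equiv> PiM I (\<lambda>i. density lborel (normal_density (\<mu> i) \<sigma>))"
  shows "measure P {x \<in> space P. \<epsilon> * \<sigma>\<^sup>2 - (\<Sum>i\<in>I. (\<mu> i - \<nu> i)\<^sup>2) / 2 < (\<Sum>i\<in>I. (\<mu> i - \<nu> i) * (x i - \<mu> i))}
    \<le> \<delta>"
proof -
  interpret P: prob_space P
    unfolding P_def \<sigma>_def
    by (intro prob_space_PiM prob_space_normal_density gauss_sigma_pos e d \<Delta>)
  define r where "r = sqrt (\<Sum>i\<in>I. (\<mu> i - \<nu> i)\<^sup>2)"
  define T where "T = \<epsilon> * \<sigma>\<^sup>2 - r\<^sup>2 / 2"
  define L where "L = (\<lambda>x. \<Sum>i\<in>I. (\<mu> i - \<nu> i) * (x i - \<mu> i))"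
  have \<sigma>: "0 < \<sigma>"
    unfolding \<sigma>_def by (intro gauss_sigma_pos e d \<Delta>)
  have r: "0 < r" "r \<le> \<Delta>" "r\<^sup>2 = (\<Sum>i\<in>I. (\<mu> i - \<nu> i)\<^sup>2)"
    using n2 sens \<Delta> by (simp_all add: r_def real_sqrt_le_iff' less_imp_le)
  have dist: "distributed P lborel L (normal_density 0 (\<sigma> * r))"
    unfolding P_def L_def r_def by (rule PiM_normal_linear_combination[OF fin \<sigma> n2])
  have "emeasure P (L -` {T<..} \<inter> space P)
      = (\<integral>\<^sup>+y. ennreal (normal_density 0 (\<sigma> * r) y) * indicator {T<..} y \<partial>lborel)"
    by (rule distributed_emeasure[OF dist]) simp
  also have "\<dots> \<le> ennreal (normal_tail_majorant (T / (\<sigma> * r)))"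
    using \<sigma> r by (intro normal_upper_tail_le_majorant) simp
  also have "T / (\<sigma> * r) = \<epsilon> * \<sigma> / r - r / (2 * \<sigma>)"
    unfolding T_def using \<sigma> r by (simp add: field_simps power2_eq_square)
  also have "ennreal (normal_tail_majorant (\<epsilon> * \<sigma> / r - r / (2 * \<sigma>))) \<le> ennreal \<delta>"
    unfolding \<sigma>_def by (intro ennreal_leI gauss_sigma_tail_le[OF e d r(1,2)])
  finally have "measure P (L -` {T<..} \<inter> space P) \<le> \<delta>"
    using d by (simp add: P.emeasure_eq_measure)
  moreover have "L -` {T<..} \<inter> space P = {x \<in> space P. T < L x}"
    by auto
  ultimately show ?thesis
    by (simp add: T_def L_def r(3))
qed

lemma gaussian_mechanism_approx_dp:
  fixes \<mu> \<nu> :: "'i \<Rightarrow> real"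
  assumes fin: "finite I" and e: "0 < \<epsilon>" "\<epsilon> \<le> 1" and d: "0 < \<delta>" "\<delta> \<le> 1" and \<Delta>: "0 < \<Delta>"
    and sens: "(\<Sum>i\<in>I. (\<mu> i - \<nu> i)\<^sup>2) \<le> \<Delta>\<^sup>2"
  defines "\<sigma> \<equiv> gauss_sigma \<Delta> \<epsilon> \<delta>"
  assumes S: "S \<in> sets (PiM I (\<lambda>i. density lborel (normal_density (\<mu> i) \<sigma>)))"
  shows "measure (PiM I (\<lambda>i. density lborel (normal_density (\<mu> i) \<sigma>))) S
    \<le> exp \<epsilon> * measure (PiM I (\<lambda>i. density lborel (normal_density (\<nu> i) \<sigma>))) S + \<delta>"
proof (cases "(\<Sum>i\<in>I. (\<mu> i - \<nu> i)\<^sup>2) = 0")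
  case True
  then have "PiM I (\<lambda>i. density lborel (normal_density (\<mu> i) \<sigma>))
      = PiM I (\<lambda>i. density lborel (normal_density (\<nu> i) \<sigma>))"
    using fin by (intro PiM_cong) (simp_all add: sum_nonneg_eq_0_iff)
  moreover have "measure M S \<le> exp \<epsilon> * measure M S" for M :: "('i \<Rightarrow> real) measure"
    using e mult_right_mono[of 1 "exp \<epsilon>" "measure M S"] by simp
  ultimately show ?thesis
    using d by (metis add_increasing2 less_imp_le)
next
  case False
  then have n2: "0 < (\<Sum>i\<in>I. (\<mu> i - \<nu> i)\<^sup>2)"
    by (simp add: order_less_le sum_nonneg)
  have \<sigma>: "0 < \<sigma>"
    unfolding \<sigma>_def by (intro gauss_sigma_pos e d \<Delta>)
  have finite: "finite_measure (density (PiM I (\<lambda>_. lborel)) (\<lambda>x. ennreal (\<Prod>i\<in>I. normal_density (\<theta> i) \<sigma> (x i))))"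
    for \<theta>
    using prob_space.finite_measure[OF prob_space_PiM[OF prob_space_normal_density[OF \<sigma>]], of I \<theta>]
    unfolding PiM_normal_eq_density[OF fin \<sigma>] .
  define T where "T = \<epsilon> * \<sigma>\<^sup>2 - (\<Sum>i\<in>I. (\<mu> i - \<nu> i)\<^sup>2) / 2"
  define G where "G = {x \<in> space (PiM I (\<lambda>_. lborel)). (\<Sum>i\<in>I. (\<mu> i - \<nu> i) * (x i - \<mu> i)) \<le> T}"
  have "(\<Prod>i\<in>I. normal_density (\<mu> i) \<sigma> (x i)) \<le> exp \<epsilon> * (\<Prod>i\<in>I. normal_density (\<nu> i) \<sigma> (x i))"
    if "x \<in> G" for x
    using that by (intro prod_normal_density_le_exp fin \<sigma>) (simp add: G_def T_def)
  moreover have "space (PiM I (\<lambda>_. lborel)) - G = {x \<in> space (PiM I (\<lambda>i. density lborel (normal_density (\<mu> i) \<sigma>))).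
      T < (\<Sum>i\<in>I. (\<mu> i - \<nu> i) * (x i - \<mu> i))}"
    by (auto simp: G_def space_PiM)
  then have "measure (PiM I (\<lambda>i. density lborel (normal_density (\<mu> i) \<sigma>))) (space (PiM I (\<lambda>_. lborel)) - G) \<le> \<delta>"
    using gaussian_privacy_loss_tail[OF fin e d \<Delta> n2 sens] by (simp add: \<sigma>_def T_def)
  ultimately show ?thesis
    using S unfolding PiM_normal_eq_density[OF fin \<sigma>]
    by (intro density_measure_le_exp_plus finite) (auto simp: G_def prod_nonneg normal_density_nonneg)
qed

lemma gaussian_mechanism_diff_private:
  fixes f :: "'r list \<Rightarrow> 'i \<Rightarrow> real"
  assumes "finite I" and "0 < \<epsilon>" "\<epsilon> \<le> 1" and "0 < \<delta>" "\<delta> \<le> 1" and "0 < \<Delta>"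
    and "\<And>R1 R2. neighbours R1 R2 \<Longrightarrow> \<forall>t\<in>set R1. ok t \<Longrightarrow> \<forall>t\<in>set R2. ok t \<Longrightarrow>
      (\<Sum>i\<in>I. (f R1 i - f R2 i)\<^sup>2) \<le> \<Delta>\<^sup>2"
  shows "diff_private (\<lambda>R. PiM I (\<lambda>i. density lborel (normal_density (f R i) (gauss_sigma \<Delta> \<epsilon> \<delta>)))) ok \<epsilon> \<delta>"
  unfolding diff_private_def using assms by (auto intro!: gaussian_mechanism_approx_dp)

section \<open>Sums of monomials\<close>

abbreviation words :: "nat \<Rightarrow> nat \<Rightarrow> (nat \<Rightarrow> nat) set" where
  "words m i \<equiv> PiE {..<i} (\<lambda>_. {..<m})"

definition word_exponents :: "nat \<Rightarrow> (nat \<Rightarrow> nat) \<Rightarrow> nat \<Rightarrow> nat" where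
  "word_exponents i w j = card {l \<in> {..<i}. w l = j}"

lemma word_exponents_append:
  "word_exponents (Suc i) (w(i := j)) = (word_exponents i w)(j := word_exponents i w j + 1)"
proof -
  have "{l \<in> {..<Suc i}. (w(i := j)) l = j'}
      = (if j' = j then insert i {l \<in> {..<i}. w l = j'} else {l \<in> {..<i}. w l = j'})" for j'
    by (auto simp: less_Suc_eq)
  then show ?thesis
    by (simp add: word_exponents_def fun_eq_iff)
qed

lemma monomials_subset_word_exponents: "monomials m i \<subseteq> word_exponents i ` words m i"
proof (induction i)
  case 0
  have "e = (\<lambda>_. 0)" if "e \<in> monomials m 0" for e
    using that by (auto simp: monomials_def fun_eq_iff not_less[symmetric])
  moreover have "word_exponents 0 (\<lambda>_. undefined) = (\<lambda>_. 0)" "(\<lambda>_. undefined) \<in> words m 0"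
    by (auto simp: word_exponents_def)
  ultimately show ?case
    by (metis image_eqI subsetI)
next
  case (Suc i)
  show ?case
  proof
    fix e assume e: "e \<in> monomials m (Suc i)"
    have "\<exists>j0<m. 0 < e j0"
    proof (rule ccontr)
      assume "\<not> ?thesis"
      then have "(\<Sum>j<m. e j) = 0" by auto
      with e show False by (simp add: monomials_def)
    qed
    then obtain j0 where j0: "j0 < m" "0 < e j0"
      by blast
    define e' where "e' = e(j0 := e j0 - 1)"
    have "(\<Sum>j<m. e j) = e j0 + (\<Sum>j\<in>{..<m} - {j0}. e j)" "(\<Sum>j<m. e' j) = e' j0 + (\<Sum>j\<in>{..<m} - {j0}. e' j)"
      using j0 by (simp_all add: sum.remove)
    moreover have "(\<Sum>j\<in>{..<m} - {j0}. e' j) = (\<Sum>j\<in>{..<m} - {j0}. e j)"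
      by (intro sum.cong) (auto simp: e'_def)
    ultimately have "e' \<in> monomials m i"
      using e j0 by (auto simp: monomials_def e'_def)
    then obtain w where w: "w \<in> words m i" "word_exponents i w = e'"
      using Suc.IH by blast
    have "word_exponents (Suc i) (w(i := j0)) = e"
      using w(2) j0 by (simp add: word_exponents_append fun_eq_iff e'_def)
    moreover have "w(i := j0) \<in> words m (Suc i)"
      using w(1) j0 by (auto simp: PiE_iff extensional_def)
    ultimately show "e \<in> word_exponents (Suc i) ` words m (Suc i)"
      by blast
  qed
qed

lemma finite_monomials: "finite (monomials m i)"
  by (rule finite_subset[OF monomials_subset_word_exponents]) (simp add: finite_PiE)

lemma mono_eval_word_exponents:
  assumes "w \<in> words m i"
  shows "mono_eval m (word_exponents i w) t = (\<Prod>l<i. t (w l))"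
proof -
  have "(\<Prod>l<i. t (w l)) = (\<Prod>j<m. \<Prod>l\<in>{l \<in> {..<i}. w l = j}. t (w l))"
    using assms by (intro prod.group[symmetric]) auto
  also have "\<dots> = (\<Prod>j<m. t j ^ word_exponents i w j)"
    by (simp add: word_exponents_def)
  finally show ?thesis
    by (simp add: mono_eval_def)
qed

lemma sum_words_prod:
  fixes a :: "nat \<Rightarrow> 'a :: comm_semiring_1"
  shows "(\<Sum>w\<in>words m i. \<Prod>l<i. a (w l)) = (\<Sum>j<m. a j) ^ i"
  using prod_sum_PiE[where A="{..<i}" and B="\<lambda>_. {..<m}" and f="\<lambda>_ j. a j"] by simp

lemma sum_monomials_le_sum_words:
  fixes h :: "(nat \<Rightarrow> nat) \<Rightarrow> real"
  assumes "\<And>e. 0 \<le> h e"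
  shows "(\<Sum>e\<in>monomials m i. h e) \<le> (\<Sum>w\<in>words m i. h (word_exponents i w))"
proof -
  have "(\<Sum>e\<in>monomials m i. h e) \<le> (\<Sum>e\<in>word_exponents i ` words m i. h e)"
    using assms monomials_subset_word_exponents by (intro sum_mono2) (auto simp: finite_PiE)
  also have "\<dots> \<le> (\<Sum>w\<in>words m i. h (word_exponents i w))"
    using sum_image_le[of "words m i" h "word_exponents i"] assms by (simp add: finite_PiE o_def)
  finally show ?thesis .
qed

lemma sum_monomials_sq_le:
  "(\<Sum>e\<in>monomials m i. (mono_eval m e t)\<^sup>2) \<le> (\<Sum>j<m. (t j)\<^sup>2) ^ i"
proof -
  have "(\<Sum>e\<in>monomials m i. (mono_eval m e t)\<^sup>2)
      \<le> (\<Sum>w\<in>words m i. (mono_eval m (word_exponents i w) t)\<^sup>2)"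
    by (rule sum_monomials_le_sum_words) simp
  also have "\<dots> = (\<Sum>w\<in>words m i. (\<Prod>l<i. t (w l))\<^sup>2)"
    by (intro sum.cong refl) (simp add: mono_eval_word_exponents)
  also have "\<dots> = (\<Sum>j<m. (t j)\<^sup>2) ^ i"
    using sum_words_prod[of "\<lambda>j. (t j)\<^sup>2"] by (simp add: prod_power_distrib)
  finally show ?thesis .
qed

lemma sum_monomials_diff_sq_le:
  "(\<Sum>e\<in>monomials m i. (mono_eval m e t - mono_eval m e s)\<^sup>2)
    \<le> (\<Sum>j<m. (t j)\<^sup>2) ^ i + (\<Sum>j<m. (s j)\<^sup>2) ^ i - 2 * (\<Sum>j<m. t j * s j) ^ i"
proof -
  have "(\<Sum>e\<in>monomials m i. (mono_eval m e t - mono_eval m e s)\<^sup>2)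
      \<le> (\<Sum>w\<in>words m i. (mono_eval m (word_exponents i w) t - mono_eval m (word_exponents i w) s)\<^sup>2)"
    by (rule sum_monomials_le_sum_words) simp
  also have "\<dots> = (\<Sum>w\<in>words m i. ((\<Prod>l<i. t (w l)) - (\<Prod>l<i. s (w l)))\<^sup>2)"
    by (intro sum.cong refl) (simp add: mono_eval_word_exponents)
  also have "\<dots> = (\<Sum>w\<in>words m i. (\<Prod>l<i. (t (w l))\<^sup>2) + (\<Prod>l<i. (s (w l))\<^sup>2) - 2 * (\<Prod>l<i. t (w l) * s (w l)))"
    by (simp add: power2_diff prod_power_distrib prod.distrib mult.assoc)
  also have "\<dots> = (\<Sum>j<m. (t j)\<^sup>2) ^ i + (\<Sum>j<m. (s j)\<^sup>2) ^ i - 2 * (\<Sum>j<m. t j * s j) ^ i"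
    using sum_words_prod[of "\<lambda>j. (t j)\<^sup>2"] sum_words_prod[of "\<lambda>j. (s j)\<^sup>2"]
      sum_words_prod[of "\<lambda>j. t j * s j"]
    by (simp add: sum.distrib sum_subtractf sum_distrib_left[symmetric])
  finally show ?thesis .
qed

lemma sum_sq_le_of_l2norm_le:
  assumes "l2norm m x \<le> B"
  shows "(\<Sum>j<m. (x j)\<^sup>2) \<le> B\<^sup>2"
proof -
  have "0 \<le> (\<Sum>j<m. (x j)\<^sup>2)"
    by (simp add: sum_nonneg)
  moreover have "sqrt (\<Sum>j<m. (x j)\<^sup>2) \<le> B"
    using assms by (simp add: l2norm_def)
  ultimately show ?thesis
    using power_mono[of "sqrt (\<Sum>j<m. (x j)\<^sup>2)" B 2] by simp
qed

lemma abs_inner_le_of_l2norm_le: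
  assumes "l2norm m t \<le> B" "l2norm m s \<le> B"
  shows "\<bar>\<Sum>j<m. t j * s j\<bar> \<le> B\<^sup>2"
proof -
  have "\<bar>\<Sum>j<m. t j * s j\<bar> \<le> (\<Sum>j<m. ((t j)\<^sup>2 + (s j)\<^sup>2) / 2)"
  proof (rule order_trans[OF sum_abs sum_mono])
    fix j
    show "\<bar>t j * s j\<bar> \<le> ((t j)\<^sup>2 + (s j)\<^sup>2) / 2"
      using sum_squares_bound[of "\<bar>t j\<bar>" "\<bar>s j\<bar>"] by (simp add: abs_mult)
  qed
  also have "\<dots> \<le> B\<^sup>2"
    using sum_sq_le_of_l2norm_le[OF assms(1)] sum_sq_le_of_l2norm_le[OF assms(2)]
    by (simp add: sum.distrib sum_divide_distrib[symmetric])
  finally show ?thesis .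
qed

lemma diff_sq_le_of_nonneg:
  fixes a b :: real
  assumes "0 \<le> a" "0 \<le> b" "a\<^sup>2 \<le> c" "b\<^sup>2 \<le> c"
  shows "(a - b)\<^sup>2 \<le> c"
proof (cases "b \<le> a")
  case True
  then have "(a - b)\<^sup>2 \<le> a\<^sup>2" using assms by (intro power_mono) auto
  then show ?thesis using assms by linarith
next
  case False
  then have "(b - a)\<^sup>2 \<le> b\<^sup>2" using assms by (intro power_mono) auto
  then show ?thesis using assms by (simp add: power2_commute)
qed

lemma sum_monomials_diff_sq_le_cFPM:
  assumes t: "l2norm m t \<le> B" and s: "l2norm m s \<le> B"
  shows "(\<Sum>e\<in>monomials m i. (mono_eval m e t - mono_eval m e s)\<^sup>2) \<le> cFPM m i * B ^ (2 * i)"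
proof -
  define u v w where "u = (\<Sum>j<m. (t j)\<^sup>2)" "v = (\<Sum>j<m. (s j)\<^sup>2)" "w = (\<Sum>j<m. t j * s j)"
  have "u ^ i \<le> B ^ (2 * i)" "v ^ i \<le> B ^ (2 * i)"
    unfolding u_v_w_def power_mult
    using sum_sq_le_of_l2norm_le[OF t] sum_sq_le_of_l2norm_le[OF s]
    by (auto intro!: power_mono sum_nonneg)
  moreover have "\<bar>w ^ i\<bar> \<le> B ^ (2 * i)"
    unfolding u_v_w_def power_mult power_abs
    using abs_inner_le_of_l2norm_le[OF t s] by (intro power_mono) auto
  moreover have "(\<Sum>e\<in>monomials m i. (mono_eval m e t - mono_eval m e s)\<^sup>2) \<le> u ^ i + v ^ i - 2 * w ^ i"
    unfolding u_v_w_def by (rule sum_monomials_diff_sq_le)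
  moreover have "u ^ i + v ^ i - 2 * w ^ i \<le> B ^ (2 * i)" if "even i" "m = 1"
  proof -
    have "u ^ i + v ^ i - 2 * w ^ i = (t 0 ^ i - s 0 ^ i)\<^sup>2"
      using that by (simp add: u_v_w_def power2_diff power_mult_distrib power_even_eq[symmetric]
          power_mult[symmetric] mult.commute)
    also have "\<dots> \<le> B ^ (2 * i)"
      using \<open>u ^ i \<le> B ^ (2 * i)\<close> \<open>v ^ i \<le> B ^ (2 * i)\<close> that
      by (intro diff_sq_le_of_nonneg) (simp_all add: u_v_w_def zero_le_even_power power_mult[symmetric]
          mult.commute)
    finally show ?thesis .
  qed
  moreover have "0 \<le> w ^ i" if "even i"
    using that by (simp add: zero_le_even_power)
  ultimately show ?thesis
    unfolding cFPM_def by (auto split: if_splits)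
qed

lemma sum_monomials_range:
  "(\<Sum>p\<in>monomials_range m lo hi. f p) = (\<Sum>i=lo..hi. \<Sum>e\<in>monomials m i. f e)"
  unfolding monomials_range_def
  by (intro sum.UNION_disjoint finite_monomials ballI finite_atLeastAtMost) (auto simp: monomials_def)

lemma finite_monomials_range: "finite (monomials_range m lo hi)"
  by (simp add: monomials_range_def finite_monomials)

lemma mono_eval_order_zero:
  assumes "e \<in> monomials m 0"
  shows "mono_eval m e x = 1"
  using assms by (simp add: monomials_def mono_eval_def)

lemma Delta_u_sq: "(Delta_u m k B)\<^sup>2 = (\<Sum>i=1..k. cFPM m i * B ^ (2 * i))"
proof -
  have "0 \<le> (\<Sum>i=1..k. cFPM m i * B ^ (2 * i))"
    by (intro sum_nonneg mult_nonneg_nonneg) (auto simp: cFPM_def power_mult)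
  then show ?thesis
    by (simp add: Delta_u_def)
qed

lemma Delta_u_pos:
  assumes "0 < B" "1 \<le> k"
  shows "0 < Delta_u m k B"
proof -
  have "0 < (\<Sum>i=1..k. cFPM m i * B ^ (2 * i))"
    using assms by (intro sum_pos) (auto simp: cFPM_def)
  then show ?thesis
    by (simp add: Delta_u_def)
qed

lemma Delta_u_sq_le_Delta_join_sq:
  assumes "0 < B" "1 \<le> k"
  shows "(Delta_u m k B)\<^sup>2 \<le> (Delta_join m k B)\<^sup>2"
  using Delta_u_pos[OF assms, of m] by (intro power_mono) (auto simp: Delta_join_def)

lemma two_sum_le_Delta_join_sq: "2 * (\<Sum>i=0..k. B ^ (2 * i)) \<le> (Delta_join m k B)\<^sup>2"
proof -
  have "0 \<le> 2 * (\<Sum>i=0..k. B ^ (2 * i))"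
    by (simp add: sum_nonneg power_mult)
  moreover have "sqrt (2 * (\<Sum>i=0..k. B ^ (2 * i))) \<le> Delta_join m k B"
    by (simp add: Delta_join_def)
  ultimately show ?thesis
    using power_mono[of "sqrt (2 * (\<Sum>i=0..k. B ^ (2 * i)))" "Delta_join m k B" 2] by simp
qed

lemma monomials_range_diff_sq_le_Delta_u:
  assumes "l2norm m t \<le> B" "l2norm m s \<le> B"
  shows "(\<Sum>p\<in>monomials_range m lo k. (mono_eval m p t - mono_eval m p s)\<^sup>2) \<le> (Delta_u m k B)\<^sup>2"
proof -
  define S where "S i = (\<Sum>e\<in>monomials m i. (mono_eval m e t - mono_eval m e s)\<^sup>2)" for i
  have "(\<Sum>p\<in>monomials_range m lo k. (mono_eval m p t - mono_eval m p s)\<^sup>2) = (\<Sum>i=lo..k. S i)"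
    by (simp add: S_def sum_monomials_range)
  also have "\<dots> \<le> (\<Sum>i=0..k. S i)"
    by (intro sum_mono2) (auto simp: S_def sum_nonneg)
  also have "\<dots> = S 0 + (\<Sum>i=1..k. S i)"
    by (simp add: sum.atLeast_Suc_atMost)
  also have "S 0 = 0"
    by (simp add: S_def mono_eval_order_zero)
  also have "0 + (\<Sum>i=1..k. S i) \<le> (Delta_u m k B)\<^sup>2"
    unfolding Delta_u_sq S_def by (simp add: sum_mono sum_monomials_diff_sq_le_cFPM assms)
  finally show ?thesis .
qed

lemma monomials_range_sq_le:
  assumes "l2norm m t \<le> B"
  shows "(\<Sum>p\<in>monomials_range m lo hi. (mono_eval m p t)\<^sup>2) \<le> (\<Sum>i=lo..hi. B ^ (2 * i))"
  unfolding sum_monomials_range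
proof (rule sum_mono)
  fix i
  have "(\<Sum>e\<in>monomials m i. (mono_eval m e t)\<^sup>2) \<le> (\<Sum>j<m. (t j)\<^sup>2) ^ i"
    by (rule sum_monomials_sq_le)
  also have "\<dots> \<le> (B\<^sup>2) ^ i"
    using sum_sq_le_of_l2norm_le[OF assms] by (intro power_mono) (simp_all add: sum_nonneg)
  finally show "(\<Sum>e\<in>monomials m i. (mono_eval m e t)\<^sup>2) \<le> B ^ (2 * i)"
    by (simp add: power_mult)
qed

section \<open>Sensitivity of FPM\<close>

lemma sum_list_map_filter_if:
  "sum_list (map f (filter P xs)) = sum_list (map (\<lambda>x. if P x then f x else 0) xs)"
  by (induction xs) auto

lemma neighbours_sum_list_diffE:
  assumes "neighbours R1 R2"
  obtains x1 x2 where "x1 \<in> set R1" "x2 \<in> set R2"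
    "\<And>f :: 'r \<Rightarrow> 'b :: ab_group_add. sum_list (map f R1) - sum_list (map f R2) = f x1 - f x2"
proof -
  obtain r where len: "length R1 = length R2" and r: "r < length R1"
    and eq: "\<And>j. j < length R1 \<Longrightarrow> j \<noteq> r \<Longrightarrow> R1 ! j = R2 ! j"
    using assms unfolding neighbours_def by blast
  have "sum_list (map f R1) - sum_list (map f R2) = f (R1 ! r) - f (R2 ! r)" for f :: "'r \<Rightarrow> 'b"
  proof -
    have "sum_list (map f R1) - sum_list (map f R2) = (\<Sum>j<length R1. f (R1 ! j) - f (R2 ! j))"
      using len by (simp add: sum_list_sum_nth atLeast0LessThan sum_subtractf)
    also have "\<dots> = (\<Sum>j<length R1. if j = r then f (R1 ! r) - f (R2 ! r) else 0)"
      using eq by (intro sum.cong) auto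
    finally show ?thesis
      using r by simp
  qed
  moreover have "R1 ! r \<in> set R1" "R2 ! r \<in> set R2"
    using r len by simp_all
  ultimately show ?thesis
    using that by blast
qed

lemma sum_keyed_diff_sq_le:
  fixes u v :: "'p \<Rightarrow> real"
  assumes "finite D"
  shows "(\<Sum>a\<in>D. \<Sum>p\<in>P. ((if a1 = a then u p else 0) - (if a2 = a then v p else 0))\<^sup>2)
    \<le> (if a1 = a2 then (\<Sum>p\<in>P. (u p - v p)\<^sup>2) else (\<Sum>p\<in>P. (u p)\<^sup>2) + (\<Sum>p\<in>P. (v p)\<^sup>2))"
proof (cases "a1 = a2")
  case True
  have "(\<Sum>a\<in>D. \<Sum>p\<in>P. ((if a1 = a then u p else 0) - (if a2 = a then v p else 0))\<^sup>2)
      = (\<Sum>a\<in>D. if a1 = a then (\<Sum>p\<in>P. (u p - v p)\<^sup>2) else 0)"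
    using True by (intro sum.cong) auto
  also have "\<dots> \<le> (\<Sum>p\<in>P. (u p - v p)\<^sup>2)"
    using assms by (simp add: sum.delta sum_nonneg)
  finally show ?thesis
    using True by simp
next
  case False
  have "(\<Sum>a\<in>D. \<Sum>p\<in>P. ((if a1 = a then u p else 0) - (if a2 = a then v p else 0))\<^sup>2)
      = (\<Sum>p\<in>P. \<Sum>a\<in>D. (if a1 = a then (u p)\<^sup>2 else 0) + (if a2 = a then (v p)\<^sup>2 else 0))"
    using False by (subst sum.swap) (intro sum.cong; auto)
  also have "\<dots> \<le> (\<Sum>p\<in>P. (u p)\<^sup>2 + (v p)\<^sup>2)"
    using assms by (intro sum_mono) (simp add: sum.distrib sum.delta)
  finally show ?thesis
    using False by (simp add: sum.distrib)
qed

lemma FPM_union_sensitivity: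
  assumes "neighbours R1 R2" "\<forall>t\<in>set R1. l2norm m t \<le> B" "\<forall>t\<in>set R2. l2norm m t \<le> B"
  shows "(\<Sum>p\<in>monomials_range m 1 k.
      ((\<Sum>t\<leftarrow>R1. mono_eval m p t) - (\<Sum>t\<leftarrow>R2. mono_eval m p t))\<^sup>2) \<le> (Delta_u m k B)\<^sup>2"
proof -
  obtain x1 x2 where "x1 \<in> set R1" "x2 \<in> set R2"
    and diff: "\<And>f :: _ \<Rightarrow> real. sum_list (map f R1) - sum_list (map f R2) = f x1 - f x2"
    using neighbours_sum_list_diffE[OF assms(1)] by blast
  then show ?thesis
    using assms by (simp add: diff monomials_range_diff_sq_le_Delta_u)
qed

lemma FPM_join_sensitivity:
  assumes D: "finite D" and B: "0 < B" and k: "1 \<le> k" and "neighbours R1 R2"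
    and "\<forall>t\<in>set R1. l2norm m (snd t) \<le> B" "\<forall>t\<in>set R2. l2norm m (snd t) \<le> B"
  defines "f R x \<equiv> (\<Sum>t\<leftarrow>filter (\<lambda>t. fst t = fst x) R. mono_eval m (snd x) (snd t))"
  shows "(\<Sum>x\<in>D \<times> monomials_range m 0 k. (f R1 x - f R2 x)\<^sup>2) \<le> (Delta_join m k B)\<^sup>2"
proof -
  obtain r1 r2 where r: "r1 \<in> set R1" "r2 \<in> set R2"
    and diff: "\<And>g :: _ \<Rightarrow> real. sum_list (map g R1) - sum_list (map g R2) = g r1 - g r2"
    using neighbours_sum_list_diffE[OF assms(4)] by blast
  define a1 x1 a2 x2 where "a1 = fst r1" "x1 = snd r1" "a2 = fst r2" "x2 = snd r2"
  have x: "l2norm m x1 \<le> B" "l2norm m x2 \<le> B"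
    using r assms(5,6) by (simp_all add: a1_x1_a2_x2_def)
  have f_diff: "f R1 (a, p) - f R2 (a, p)
      = (if a1 = a then mono_eval m p x1 else 0) - (if a2 = a then mono_eval m p x2 else 0)" for a p
    unfolding f_def sum_list_map_filter_if diff by (simp add: a1_x1_a2_x2_def)
  let ?MR = "monomials_range m 0 k"
  have "(\<Sum>x\<in>D \<times> ?MR. (f R1 x - f R2 x)\<^sup>2)
      = (\<Sum>a\<in>D. \<Sum>p\<in>?MR. ((if a1 = a then mono_eval m p x1 else 0) - (if a2 = a then mono_eval m p x2 else 0))\<^sup>2)"
    unfolding sum.cartesian_product by (intro sum.cong) (auto simp: f_diff)
  also have "\<dots> \<le> (if a1 = a2 then \<Sum>p\<in>?MR. (mono_eval m p x1 - mono_eval m p x2)\<^sup>2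
      else (\<Sum>p\<in>?MR. (mono_eval m p x1)\<^sup>2) + (\<Sum>p\<in>?MR. (mono_eval m p x2)\<^sup>2))"
    by (rule sum_keyed_diff_sq_le[OF D])
  also have "\<dots> \<le> (Delta_join m k B)\<^sup>2"
    using monomials_range_diff_sq_le_Delta_u[OF x, of 0 k] Delta_u_sq_le_Delta_join_sq[OF B k, of m]
      monomials_range_sq_le[OF x(1), of 0 k] monomials_range_sq_le[OF x(2), of 0 k]
      two_sum_le_Delta_join_sq[where m=m and k=k and B=B]
    by (cases "a1 = a2") simp_all
  finally show ?thesis .
qed

theorem theorem5:
  fixes eps delta B :: real and k m :: nat and D :: "'a set"
  assumes "0 < eps" "eps \<le> 1" "0 < delta" "delta \<le> 1" "0 < B" "1 \<le> k" "1 \<le> m"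
    and "finite D"
  shows "diff_private (FPM_union m k B eps delta) (\<lambda>x. l2norm m x \<le> B) eps delta
       \<and> diff_private (FPM_join D m k B eps delta) (\<lambda>t. l2norm m (snd t) \<le> B) eps delta"
proof
  show "diff_private (FPM_union m k B eps delta) (\<lambda>x. l2norm m x \<le> B) eps delta"
    unfolding FPM_union_def
    using finite_monomials_range assms(1-4) Delta_u_pos[OF assms(5,6)] FPM_union_sensitivity
    by (rule gaussian_mechanism_diff_private)
  have "0 < Delta_join m k B"
    using Delta_u_pos[OF assms(5,6), of m] by (simp add: Delta_join_def less_max_iff_disj)
  with finite_cartesian_product[OF assms(8) finite_monomials_range] assms(1-4)
  show "diff_private (FPM_join D m k B eps delta) (\<lambda>t. l2norm m (snd t) \<le> B) eps delta"
    unfolding FPM_join_def case_prod_beta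
    using FPM_join_sensitivity[OF assms(8,5,6)]
    by (rule gaussian_mechanism_diff_private)
qed

end
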